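(* Let $K$ be a number field and let $\alpha>0$ and $\beta>0$ be two algebraically independent real numbers. Suppose $F(x)\in K[[x^{\mathbb{R}}]]$ is a Hahn series that is both $\alpha$-Mahler and $\beta$-Mahler. Then $F(x)$ is rational, i.e. $F(x)\in K(x)$.
   Context: A Hahn series over $K$ with exponent group $\mathbb{R}$ is a formal expression $F(x)=\sum_{i\in\mathbb{R}} f_i x^i$ with $f_i\in K$ whose support $P(F)=\{i: f_i\neq 0\}$ is well-ordered; these form a field $K[[x^{\mathbb{R}}]]$ containing $K(x)$. For $\gamma>0$, $F(x^\gamma)=\sum_i f_i x^{\gamma i}$. For real $\gamma>0$, $F$ is $\gamma$-Mahler if there exist $d\ge0$ and polynomials $P_0,\dots,P_d,A\in K[x]$, not all $P_i$ zero, with $\sum_{i=0}^d P_i(x)F(x^{\gamma^i})=A(x)$. *)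

theory Defs
  imports Complex_Main "HOL-Computational_Algebra.Polynomial"
begin

definition number_field :: "complex set \<Rightarrow> bool" where
  "number_field K \<longleftrightarrow>
     0 \<in> K \<and> 1 \<in> K \<and>
     (\<forall>x\<in>K. \<forall>y\<in>K. x + y \<in> K \<and> x * y \<in> K \<and> x - y \<in> K) \<and>
     (\<forall>x\<in>K. x \<noteq> 0 \<longrightarrow> inverse x \<in> K) \<and>
     (\<exists>B. finite B \<and> B \<subseteq> K \<and>
        (\<forall>x\<in>K. \<exists>c. (\<forall>b\<in>B. c b \<in> \<rat>) \<and> x = (\<Sum>b\<in>B. c b * b)))"

text \<open>A Hahn series over K with exponent group the reals is represented by its
coefficient function; the support must be well-ordered.\<close>
definition hahn_series :: "complex set \<Rightarrow> (real \<Rightarrow> complex) \<Rightarrow> bool" where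
  "hahn_series K F \<longleftrightarrow>
     (\<forall>i. F i \<in> K) \<and>
     (\<forall>S. S \<subseteq> {i. F i \<noteq> 0} \<longrightarrow> S \<noteq> {} \<longrightarrow> (\<exists>m\<in>S. \<forall>s\<in>S. m \<le> s))"

definition Kpoly :: "complex set \<Rightarrow> complex poly set" where
  "Kpoly K = {p. \<forall>n. coeff p n \<in> K}"

definition poly_hahn :: "complex poly \<Rightarrow> real \<Rightarrow> complex" where
  "poly_hahn p e = (if \<exists>n::nat. e = real n then coeff p (nat \<lfloor>e\<rfloor>) else 0)"

definition pmul_hahn :: "complex poly \<Rightarrow> (real \<Rightarrow> complex) \<Rightarrow> real \<Rightarrow> complex" where
  "pmul_hahn p F e = (\<Sum>j\<le>degree p. coeff p j * F (e - real j))"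

text \<open>Substitution F(x) \<mapsto> F(x^\<gamma>) for \<gamma> > 0.\<close>
definition subst_hahn :: "real \<Rightarrow> (real \<Rightarrow> complex) \<Rightarrow> real \<Rightarrow> complex" where
  "subst_hahn \<gamma> F e = F (e / \<gamma>)"

definition mahler :: "complex set \<Rightarrow> real \<Rightarrow> (real \<Rightarrow> complex) \<Rightarrow> bool" where
  "mahler K \<gamma> F \<longleftrightarrow>
     (\<exists>(d::nat) (P :: nat \<Rightarrow> complex poly) A.
        (\<forall>i\<le>d. P i \<in> Kpoly K) \<and> A \<in> Kpoly K \<and> (\<exists>i\<le>d. P i \<noteq> 0) \<and>
        (\<lambda>e. \<Sum>i\<le>d. pmul_hahn (P i) (subst_hahn (\<gamma> ^ i) F) e) = poly_hahn A)"

text \<open>F lies in K(x): F = A/Q with A, Q \<in> K[x], Q \<noteq> 0, i.e. Q F = A.\<close>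
definition rational_hahn :: "complex set \<Rightarrow> (real \<Rightarrow> complex) \<Rightarrow> bool" where
  "rational_hahn K F \<longleftrightarrow>
     (\<exists>A Q. A \<in> Kpoly K \<and> Q \<in> Kpoly K \<and> Q \<noteq> 0 \<and> pmul_hahn Q F = poly_hahn A)"

definition alg_indep2 :: "real \<Rightarrow> real \<Rightarrow> bool" where
  "alg_indep2 a b \<longleftrightarrow>
     (\<forall>(N::nat) (c :: nat \<Rightarrow> nat \<Rightarrow> int).
        (\<exists>i\<le>N. \<exists>j\<le>N. c i j \<noteq> 0) \<longrightarrow>
        (\<Sum>i\<le>N. \<Sum>j\<le>N. of_int (c i j) * a ^ i * b ^ j) \<noteq> 0)"

end

theory Submission
  imports Defs
begin

text \<open>Let \<open>\<gamma> > 0\<close> be transcendental and \<open>\<Sum>i\<le>d. P\<^sub>i(x) F(x^(\<gamma>^i)) = A(x)\<close>. Then the support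
  of \<open>F\<close> lies in the field \<open>\<rat>(\<gamma>)\<close>: otherwise let \<open>m\<close> be the least support point outside
  \<open>\<rat>(\<gamma>)\<close> and \<open>v\<^sub>i\<close> the lowest degree of \<open>P\<^sub>i\<close>. The least of the exponents
  \<open>v\<^sub>i + \<gamma>^i m\<close> is attained for a single \<open>i\<close>, lies outside \<open>\<rat>(\<gamma>)\<close>, and at this
  exponent no other term of the equation and no term of \<open>A\<close> contributes.

  Algebraic independence of \<open>\<alpha>\<close> and \<open>\<beta>\<close> gives \<open>\<rat>(\<alpha>) \<inter> \<rat>(\<beta>) = \<rat>\<close>, so the
  support of \<open>F\<close> is rational. If it contains some \<open>s \<noteq> 0\<close>, then for \<open>i \<ge> 1\<close> the exponent
  \<open>n + \<gamma>^i s\<close> isolates the coefficient \<open>coeff P\<^sub>i n\<close>, so \<open>P\<^sub>i = 0\<close> and the equation reads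
  \<open>P\<^sub>0 F = A\<close>; otherwise \<open>F\<close> is constant.\<close>

definition rat_poly :: "'a::field_char_0 poly \<Rightarrow> bool" where
  "rat_poly p \<longleftrightarrow> (\<forall>n. coeff p n \<in> \<rat>)"

lemma rat_poly_monom: "c \<in> \<rat> \<Longrightarrow> rat_poly (monom c n)"
  by (simp add: rat_poly_def)

lemma rat_poly_1: "rat_poly 1"
  by (simp add: rat_poly_def coeff_1)

lemma rat_poly_add: "rat_poly p \<Longrightarrow> rat_poly q \<Longrightarrow> rat_poly (p + q)"
  by (simp add: rat_poly_def)

lemma rat_poly_diff: "rat_poly p \<Longrightarrow> rat_poly q \<Longrightarrow> rat_poly (p - q)"
  by (simp add: rat_poly_def)

lemma rat_poly_uminus: "rat_poly p \<Longrightarrow> rat_poly (- p)"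
  by (simp add: rat_poly_def)

lemma rat_poly_mult: "rat_poly p \<Longrightarrow> rat_poly q \<Longrightarrow> rat_poly (p * q)"
  by (simp add: rat_poly_def coeff_mult Rats_sum)

lemma transcendental_rat_poly_eq_0:
  "\<not> algebraic x \<Longrightarrow> rat_poly p \<Longrightarrow> poly p x = 0 \<Longrightarrow> p = 0"
  using algebraicI' unfolding rat_poly_def by blast

lemma transcendental_power_inj:
  assumes "\<not> algebraic (x :: 'a::field_char_0)" and "x ^ i = x ^ k"
  shows "i = k"
proof (rule ccontr)
  assume "i \<noteq> k"
  have "rat_poly (monom 1 i - monom 1 k :: 'a poly)"
    by (intro rat_poly_diff rat_poly_monom) simp_all
  moreover have "poly (monom 1 i - monom 1 k) x = 0"
    using assms(2) by (simp add: poly_monom)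
  moreover have "coeff (monom 1 i - monom 1 k :: 'a poly) i = 1"
    using \<open>i \<noteq> k\<close> by simp
  ultimately show False
    using transcendental_rat_poly_eq_0[OF assms(1)] by fastforce
qed

lemma transcendental_affine_power_eq:
  fixes x a b c :: "'a::field_char_0"
  assumes "\<not> algebraic x" and "a + b * x ^ i = c * x ^ k"
    and "a \<in> \<rat>" "b \<in> \<rat>" "c \<in> \<rat>" and "0 < i" "b \<noteq> 0"
  shows "k = i \<and> a = 0"
proof -
  define Z where "Z = monom a 0 + monom b i - monom c k"
  have "Z = 0"
  proof (rule transcendental_rat_poly_eq_0[OF assms(1)])
    show "rat_poly Z"
      unfolding Z_def using assms(3-5) by (intro rat_poly_add rat_poly_diff rat_poly_monom)
    show "poly Z x = 0"
      using assms(2) by (simp add: Z_def poly_monom)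
  qed
  then have "coeff Z i = 0" "coeff Z 0 = 0"
    by simp_all
  then show ?thesis
    using assms(6,7) by (auto simp: Z_def split: if_splits)
qed

text \<open>The field \<open>\<rat>(x)\<close>; a quotient with \<open>poly q x = 0\<close> is \<open>0\<close> (as \<open>y / 0 = 0\<close>),
  which lies in \<open>\<rat>(x)\<close> anyway.\<close>
definition Rats_adjoin :: "'a::field_char_0 \<Rightarrow> 'a set" where
  "Rats_adjoin x = {poly p x / poly q x | p q. rat_poly p \<and> rat_poly q}"

lemma Rats_adjoin_Rats: "c \<in> \<rat> \<Longrightarrow> c \<in> Rats_adjoin x"
  unfolding Rats_adjoin_def
  by (rule CollectI, rule exI[of _ "monom c 0"], rule exI[of _ 1])
    (simp add: rat_poly_monom rat_poly_1 poly_monom)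

lemma Rats_adjoin_self: "x \<in> Rats_adjoin x"
  unfolding Rats_adjoin_def
  by (rule CollectI, rule exI[of _ "monom 1 1"], rule exI[of _ 1])
    (simp add: rat_poly_monom rat_poly_1 poly_monom)

lemma Rats_adjoin_add:
  assumes "u \<in> Rats_adjoin x" "v \<in> Rats_adjoin x"
  shows "u + v \<in> Rats_adjoin x"
proof -
  obtain p q where u: "u = poly p x / poly q x" "rat_poly p" "rat_poly q"
    using assms(1) unfolding Rats_adjoin_def by blast
  obtain r s where v: "v = poly r x / poly s x" "rat_poly r" "rat_poly s"
    using assms(2) unfolding Rats_adjoin_def by blast
  consider "poly q x = 0" | "poly s x = 0" | "poly q x \<noteq> 0" "poly s x \<noteq> 0"
    by blast
  then show ?thesis
  proof cases
    case 3
    then have "u + v = poly (p * s + r * q) x / poly (q * s) x"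
      by (simp add: u v add_frac_eq)
    then show ?thesis
      unfolding Rats_adjoin_def using u v by (blast intro: rat_poly_add rat_poly_mult)
  qed (use assms u v in simp_all)
qed

lemma Rats_adjoin_uminus:
  assumes "u \<in> Rats_adjoin x"
  shows "- u \<in> Rats_adjoin x"
proof -
  obtain p q where u: "u = poly p x / poly q x" "rat_poly p" "rat_poly q"
    using assms unfolding Rats_adjoin_def by blast
  have "- u = poly (- p) x / poly q x"
    by (simp add: u)
  then show ?thesis
    unfolding Rats_adjoin_def using u by (blast intro: rat_poly_uminus)
qed

lemma Rats_adjoin_diff:
  "u \<in> Rats_adjoin x \<Longrightarrow> v \<in> Rats_adjoin x \<Longrightarrow> u - v \<in> Rats_adjoin x"
  by (simp only: diff_conv_add_uminus Rats_adjoin_add Rats_adjoin_uminus)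

lemma Rats_adjoin_mult:
  assumes "u \<in> Rats_adjoin x" "v \<in> Rats_adjoin x"
  shows "u * v \<in> Rats_adjoin x"
proof -
  obtain p q where u: "u = poly p x / poly q x" "rat_poly p" "rat_poly q"
    using assms(1) unfolding Rats_adjoin_def by blast
  obtain r s where v: "v = poly r x / poly s x" "rat_poly r" "rat_poly s"
    using assms(2) unfolding Rats_adjoin_def by blast
  have "u * v = poly (p * r) x / poly (q * s) x"
    by (simp add: u v)
  then show ?thesis
    unfolding Rats_adjoin_def using u v by (blast intro: rat_poly_mult)
qed

lemma Rats_adjoin_divide:
  assumes "u \<in> Rats_adjoin x" "v \<in> Rats_adjoin x"
  shows "u / v \<in> Rats_adjoin x"
proof -
  obtain p q where u: "u = poly p x / poly q x" "rat_poly p" "rat_poly q"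
    using assms(1) unfolding Rats_adjoin_def by blast
  obtain r s where v: "v = poly r x / poly s x" "rat_poly r" "rat_poly s"
    using assms(2) unfolding Rats_adjoin_def by blast
  have "u / v = poly (p * s) x / poly (q * r) x"
    by (simp add: u v)
  then show ?thesis
    unfolding Rats_adjoin_def using u v by (blast intro: rat_poly_mult)
qed

lemma Rats_adjoin_power: "u \<in> Rats_adjoin x \<Longrightarrow> u ^ n \<in> Rats_adjoin x"
  by (induction n) (simp_all add: Rats_adjoin_Rats Rats_adjoin_mult)

lemma Rats_adjoin_affine_iff:
  assumes "x \<noteq> 0" "c \<in> \<rat>"
  shows "c + x ^ i * t \<in> Rats_adjoin x \<longleftrightarrow> t \<in> Rats_adjoin x"
proof
  assume "c + x ^ i * t \<in> Rats_adjoin x"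
  then have "(c + x ^ i * t - c) / x ^ i \<in> Rats_adjoin x"
    by (intro Rats_adjoin_divide Rats_adjoin_diff Rats_adjoin_power)
      (simp_all add: Rats_adjoin_self Rats_adjoin_Rats assms(2))
  then show "t \<in> Rats_adjoin x"
    using assms(1) by simp
next
  assume "t \<in> Rats_adjoin x"
  then show "c + x ^ i * t \<in> Rats_adjoin x"
    using assms(2)
    by (simp add: Rats_adjoin_add Rats_adjoin_mult Rats_adjoin_power Rats_adjoin_self
        Rats_adjoin_Rats)
qed

lemma Rats_adjoin_linear_solution:
  assumes "\<not> algebraic x" "i \<noteq> k" "a + x ^ i * m = b + x ^ k * m"
    and "a \<in> Rats_adjoin x" "b \<in> Rats_adjoin x"
  shows "m \<in> Rats_adjoin x"
proof -
  have "x ^ i \<noteq> x ^ k"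
    using transcendental_power_inj[OF assms(1)] assms(2) by blast
  with assms(3) have "m = (b - a) / (x ^ i - x ^ k)"
    by (simp add: field_simps)
  then show ?thesis
    using assms(4,5)
    by (simp add: Rats_adjoin_divide Rats_adjoin_diff Rats_adjoin_power Rats_adjoin_self)
qed

lemma Rats_common_denominator:
  fixes X :: "'a::field_char_0 set"
  assumes "finite X" "X \<subseteq> \<rat>"
  shows "\<exists>D::int. D > 0 \<and> (\<forall>x\<in>X. of_int D * x \<in> \<int>)"
  using assms
proof (induction X rule: finite_induct)
  case (insert x X)
  then obtain D :: int where D: "D > 0" "\<forall>y\<in>X. of_int D * y \<in> \<int>"
    by auto
  obtain a b where ab: "b > 0" "x = of_int a / of_int b"
    using insert.prems Rats_cases' by blast
  have "of_int (D * b) * x \<in> \<int>"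
    using ab by simp
  moreover have "of_int (D * b) * y \<in> \<int>" if "y \<in> X" for y
  proof -
    have "of_int b * (of_int D * y) \<in> \<int>"
      using D(2) that by (metis Ints_mult Ints_of_int)
    then show ?thesis
      by (simp add: algebra_simps)
  qed
  ultimately show ?case
    using D(1) ab(1) by (intro exI[of _ "D * b"]) auto
qed (use zero_less_one in blast)

lemma alg_indep2_Rats_coeffs:
  assumes indep: "alg_indep2 a b" and rat: "\<forall>i j. c i j \<in> \<rat>"
    and sum0: "(\<Sum>i\<le>N. \<Sum>j\<le>N. c i j * a ^ i * b ^ j) = 0"
    and "i \<le> N" "j \<le> N"
  shows "c i j = 0"
proof -
  have "finite ((\<lambda>(i, j). c i j) ` ({..N} \<times> {..N}))" "(\<lambda>(i, j). c i j) ` ({..N} \<times> {..N}) \<subseteq> \<rat>"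
    using rat by auto
  then obtain D :: int
    where D: "D > 0" "\<forall>x\<in>(\<lambda>(i, j). c i j) ` ({..N} \<times> {..N}). of_int D * x \<in> \<int>"
    using Rats_common_denominator by blast
  define c' where "c' i j = \<lfloor>of_int D * c i j\<rfloor>" for i j
  have c': "of_int (c' i j) = of_int D * c i j" if "i \<le> N" "j \<le> N" for i j
    using D(2) that unfolding c'_def by (fastforce elim: Ints_cases)
  have "(\<Sum>i\<le>N. \<Sum>j\<le>N. of_int (c' i j) * a ^ i * b ^ j)
      = of_int D * (\<Sum>i\<le>N. \<Sum>j\<le>N. c i j * a ^ i * b ^ j)"
    by (simp add: c' sum_distrib_left mult.assoc)
  then have "\<not> (\<exists>i\<le>N. \<exists>j\<le>N. c' i j \<noteq> 0)"
    using indep sum0 unfolding alg_indep2_def by auto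
  then show ?thesis
    using c' D(1) assms(4,5) by fastforce
qed

lemma alg_indep2_commute:
  assumes "alg_indep2 a b"
  shows "alg_indep2 b a"
  unfolding alg_indep2_def
proof (intro allI impI)
  fix N and c :: "nat \<Rightarrow> nat \<Rightarrow> int"
  assume "\<exists>i\<le>N. \<exists>j\<le>N. c i j \<noteq> 0"
  then have "\<exists>i\<le>N. \<exists>j\<le>N. c j i \<noteq> 0"
    by blast
  then have "(\<Sum>i\<le>N. \<Sum>j\<le>N. of_int (c j i) * a ^ i * b ^ j) \<noteq> 0"
    using assms[unfolded alg_indep2_def, rule_format, of N "\<lambda>i j. c j i"] by simp
  also have "(\<Sum>i\<le>N. \<Sum>j\<le>N. of_int (c j i) * a ^ i * b ^ j)
      = (\<Sum>i\<le>N. \<Sum>j\<le>N. of_int (c i j) * b ^ i * a ^ j)"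
    by (subst sum.swap) (simp add: mult_ac)
  finally show "(\<Sum>i\<le>N. \<Sum>j\<le>N. of_int (c i j) * b ^ i * a ^ j) \<noteq> 0" .
qed

lemma poly_eq_sum_atMost:
  fixes x :: "'a::{comm_semiring_0,semiring_1}"
  assumes "degree p \<le> N"
  shows "poly p x = (\<Sum>i\<le>N. coeff p i * x ^ i)"
proof -
  have "poly p x = (\<Sum>i\<le>degree p. coeff p i * x ^ i)"
    by (rule poly_altdef)
  also have "\<dots> = (\<Sum>i\<le>N. coeff p i * x ^ i)"
    using assms by (intro sum.mono_neutral_left) (auto simp: coeff_eq_0)
  finally show ?thesis .
qed

text \<open>The bivariate polynomial \<open>p(X) s(Y) - q(X) r(Y)\<close> vanishes at \<open>(a, b)\<close>, hence is zero.\<close>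
lemma alg_indep2_poly_products:
  assumes indep: "alg_indep2 a b" and rat: "rat_poly p" "rat_poly q" "rat_poly r" "rat_poly s"
    and eq: "poly p a * poly s b = poly q a * poly r b"
  shows "coeff p i * coeff s j = coeff q i * coeff r j"
proof -
  define N where "N = max (max (degree p) (degree q)) (max (degree r) (degree s))"
  define c where "c i j = coeff p i * coeff s j - coeff q i * coeff r j" for i j
  have "c i j * a ^ i * b ^ j
      = (coeff p i * a ^ i) * (coeff s j * b ^ j) - (coeff q i * a ^ i) * (coeff r j * b ^ j)"
    for i j
    by (simp add: c_def algebra_simps)
  then have "(\<Sum>i\<le>N. \<Sum>j\<le>N. c i j * a ^ i * b ^ j)
      = (\<Sum>i\<le>N. coeff p i * a ^ i) * (\<Sum>j\<le>N. coeff s j * b ^ j)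
        - (\<Sum>i\<le>N. coeff q i * a ^ i) * (\<Sum>j\<le>N. coeff r j * b ^ j)"
    by (simp add: sum_subtractf sum_product)
  also have "\<dots> = poly p a * poly s b - poly q a * poly r b"
    using poly_eq_sum_atMost[of p N a] poly_eq_sum_atMost[of q N a]
      poly_eq_sum_atMost[of r N b] poly_eq_sum_atMost[of s N b]
    by (simp add: N_def)
  finally have sum0: "(\<Sum>i\<le>N. \<Sum>j\<le>N. c i j * a ^ i * b ^ j) = 0"
    using eq by simp
  show ?thesis
  proof (cases "i \<le> N \<and> j \<le> N")
    case True
    have "\<forall>i j. c i j \<in> \<rat>"
      using rat by (simp add: c_def rat_poly_def)
    then show ?thesis
      using alg_indep2_Rats_coeffs[OF indep _ sum0] True by (simp add: c_def)
  qed (auto simp: N_def coeff_eq_0)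
qed

lemma alg_indep2_transcendental: "alg_indep2 a b \<Longrightarrow> \<not> algebraic a"
proof
  assume indep: "alg_indep2 a b" and "algebraic a"
  then obtain p where p: "rat_poly p" "p \<noteq> 0" "poly p a = 0"
    unfolding algebraic_altdef rat_poly_def by blast
  have "coeff p i * coeff 1 0 = coeff 0 i * coeff 0 0" for i
    by (rule alg_indep2_poly_products[OF indep p(1) _ _ rat_poly_1])
      (use p(3) in \<open>simp_all add: rat_poly_def\<close>)
  then show False
    using p(2) by (simp add: poly_eq_iff)
qed

lemma alg_indep2_Rats_adjoin_Int_subset:
  assumes indep: "alg_indep2 a b"
  shows "Rats_adjoin a \<inter> Rats_adjoin b \<subseteq> \<rat>"
proof
  fix t assume "t \<in> Rats_adjoin a \<inter> Rats_adjoin b"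
  then obtain p q r s where rat: "rat_poly p" "rat_poly q" "rat_poly r" "rat_poly s"
    and t: "t = poly p a / poly q a" "t = poly r b / poly s b"
    unfolding Rats_adjoin_def by blast
  show "t \<in> \<rat>"
  proof (cases "poly q a = 0 \<or> poly s b = 0")
    case False
    then have "s \<noteq> 0" and "poly p a * poly s b = poly q a * poly r b"
      using t by (auto simp: field_simps)
    then have coeffs: "coeff p i * coeff s (degree s) = coeff q i * coeff r (degree s)" for i
      using alg_indep2_poly_products[OF indep rat] by blast
    define l where "l = coeff r (degree s) / coeff s (degree s)"
    have "p = smult l q"
      using coeffs \<open>s \<noteq> 0\<close> by (intro poly_eqI) (simp add: l_def field_simps)
    then have "t = l"
      using t(1) False by simp
    then show ?thesis
      using rat unfolding l_def rat_poly_def by simp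
  qed (use t in auto)
qed

lemma pmul_hahn_eq_single_term:
  assumes "\<And>j. j \<noteq> n \<Longrightarrow> coeff p j * G (e - real j) = 0"
  shows "pmul_hahn p G e = coeff p n * G (e - real n)"
proof (cases "n \<le> degree p")
  case True
  have "(\<Sum>j\<le>degree p. coeff p j * G (e - real j)) = (\<Sum>j\<in>{n}. coeff p j * G (e - real j))"
    using True by (intro sum.mono_neutral_right ballI assms) auto
  then show ?thesis
    by (simp add: pmul_hahn_def)
next
  case False
  then have "(\<Sum>j\<le>degree p. coeff p j * G (e - real j)) = 0"
    by (intro sum.neutral ballI assms) auto
  then show ?thesis
    using False by (simp add: pmul_hahn_def coeff_eq_0)
qed

lemma mahler_sum_eq_single_term:
  assumes "k \<le> d"
    and "\<And>i j. i \<le> d \<Longrightarrow> (i, j) \<noteq> (k, n) \<Longrightarrow> coeff (P i) j * F ((e - real j) / \<gamma> ^ i) = 0"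
  shows "(\<Sum>i\<le>d. pmul_hahn (P i) (subst_hahn (\<gamma> ^ i) F) e)
    = coeff (P k) n * F ((e - real n) / \<gamma> ^ k)"
proof -
  have "pmul_hahn (P i) (subst_hahn (\<gamma> ^ i) F) e
      = (if i = k then coeff (P k) n * F ((e - real n) / \<gamma> ^ k) else 0)" if "i \<le> d" for i
  proof (cases "i = k")
    case True
    then show ?thesis
      by (subst pmul_hahn_eq_single_term[where n = n])
        (use assms(2) that in \<open>auto simp: subst_hahn_def\<close>)
  next
    case False
    have "(\<Sum>j\<le>degree (P i). coeff (P i) j * F ((e - real j) / \<gamma> ^ i)) = 0"
      by (intro sum.neutral ballI assms(2)) (use False that in auto)
    with False show ?thesis
      by (simp add: pmul_hahn_def subst_hahn_def)
  qed
  then have "(\<Sum>i\<le>d. pmul_hahn (P i) (subst_hahn (\<gamma> ^ i) F) e)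
      = (\<Sum>i\<le>d. if i = k then coeff (P k) n * F ((e - real n) / \<gamma> ^ k) else 0)"
    by (intro sum.cong) simp_all
  also have "\<dots> = coeff (P k) n * F ((e - real n) / \<gamma> ^ k)"
    using assms(1) by simp
  finally show ?thesis .
qed

definition low_degree :: "'a::zero poly \<Rightarrow> nat" where
  "low_degree p = (LEAST j. coeff p j \<noteq> 0)"

lemma coeff_low_degree_neq_0: "p \<noteq> 0 \<Longrightarrow> coeff p (low_degree p) \<noteq> 0"
  unfolding low_degree_def by (rule LeastI[of _ "degree p"]) simp

lemma low_degree_le: "coeff p j \<noteq> 0 \<Longrightarrow> low_degree p \<le> j"
  unfolding low_degree_def by (rule Least_le)

lemma mahler_dominant_term:
  fixes P :: "nat \<Rightarrow> complex poly" and F :: "real \<Rightarrow> complex" and \<gamma> m :: real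
  assumes \<gamma>: "\<gamma> > 0" "\<not> algebraic \<gamma>" and P: "\<exists>i\<le>d. P i \<noteq> 0"
    and m: "m \<notin> Rats_adjoin \<gamma>" and m_min: "\<And>t. F t \<noteq> 0 \<Longrightarrow> t \<notin> Rats_adjoin \<gamma> \<Longrightarrow> m \<le> t"
  obtains k E where "k \<le> d" "P k \<noteq> 0" "E = real (low_degree (P k)) + \<gamma> ^ k * m"
    and "E \<notin> Rats_adjoin \<gamma>"
    and "\<And>i j. i \<le> d \<Longrightarrow> (i, j) \<noteq> (k, low_degree (P k)) \<Longrightarrow>
      coeff (P i) j * F ((E - real j) / \<gamma> ^ i) = 0"
proof -
  define I where "I = {i. i \<le> d \<and> P i \<noteq> 0}"
  define h where "h i = real (low_degree (P i)) + \<gamma> ^ i * m" for i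
  have "finite I" "I \<noteq> {}"
    using P by (auto simp: I_def)
  then obtain k where k: "k \<in> I" and k_min: "\<And>i. i \<in> I \<Longrightarrow> h k \<le> h i"
    using ex_is_arg_min_if_finite[of I h] unfolding is_arg_min_def by (meson not_le)
  have k_unique: "i = k" if "i \<in> I" "h i = h k" for i
  proof (rule ccontr)
    assume "i \<noteq> k"
    then have "m \<in> Rats_adjoin \<gamma>"
      using that(2) unfolding h_def
      by (rule Rats_adjoin_linear_solution[OF \<gamma>(2)]) (simp_all add: Rats_adjoin_Rats)
    with m show False by contradiction
  qed
  have hk_notin: "h k \<notin> Rats_adjoin \<gamma>"
    using m \<gamma>(1) by (simp add: h_def Rats_adjoin_affine_iff)
  have others: "coeff (P i) j * F ((h k - real j) / \<gamma> ^ i) = 0"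
    if "i \<le> d" "(i, j) \<noteq> (k, low_degree (P k))" for i j
  proof (rule ccontr)
    define t where "t = (h k - real j) / \<gamma> ^ i"
    assume "coeff (P i) j * F ((h k - real j) / \<gamma> ^ i) \<noteq> 0"
    then have Pij: "coeff (P i) j \<noteq> 0" and Ft: "F t \<noteq> 0"
      by (auto simp: t_def)
    have hk_eq: "h k = real j + \<gamma> ^ i * t"
      using \<gamma>(1) by (simp add: t_def)
    then have "t \<notin> Rats_adjoin \<gamma>"
      using hk_notin \<gamma>(1) by (simp add: Rats_adjoin_affine_iff)
    with Ft have "\<gamma> ^ i * m \<le> \<gamma> ^ i * t"
      using \<gamma>(1) m_min by simp
    moreover have "low_degree (P i) \<le> j"
      using Pij by (rule low_degree_le)
    moreover have "i \<in> I"
      using that(1) Pij by (auto simp: I_def)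
    then have "h k \<le> h i"
      by (rule k_min)
    ultimately have "real (low_degree (P i)) = real j" "h i = h k"
      using hk_eq unfolding h_def by linarith+
    then have "low_degree (P i) = j" "i = k"
      using \<open>i \<in> I\<close> k_unique by simp_all
    with that(2) show False by simp
  qed
  show ?thesis
  proof (rule that[of k "h k"])
    show "k \<le> d" "P k \<noteq> 0"
      using k by (simp_all add: I_def)
  qed (use hk_notin others in \<open>simp_all add: h_def\<close>)
qed

lemma mahler_support_subset_Rats_adjoin:
  fixes P :: "nat \<Rightarrow> complex poly" and \<gamma> :: real
  assumes \<gamma>: "\<gamma> > 0" "\<not> algebraic \<gamma>" and F: "hahn_series K F"
    and P: "\<exists>i\<le>d. P i \<noteq> 0"
    and eq: "(\<lambda>e. \<Sum>i\<le>d. pmul_hahn (P i) (subst_hahn (\<gamma> ^ i) F) e) = poly_hahn A"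
  shows "{t. F t \<noteq> 0} \<subseteq> Rats_adjoin \<gamma>"
proof (rule ccontr)
  define T where "T = {t. F t \<noteq> 0} - Rats_adjoin \<gamma>"
  assume "\<not> ?thesis"
  then have "T \<subseteq> {t. F t \<noteq> 0}" "T \<noteq> {}"
    by (auto simp: T_def)
  then obtain m where m: "m \<in> T" and m_min: "\<And>t. t \<in> T \<Longrightarrow> m \<le> t"
    using F unfolding hahn_series_def by meson
  then have Fm: "F m \<noteq> 0" and m_notin: "m \<notin> Rats_adjoin \<gamma>"
    and m_least: "\<And>t. F t \<noteq> 0 \<Longrightarrow> t \<notin> Rats_adjoin \<gamma> \<Longrightarrow> m \<le> t"
    by (auto simp: T_def)
  obtain k E where k: "k \<le> d" "P k \<noteq> 0" and E: "E = real (low_degree (P k)) + \<gamma> ^ k * m"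
    and E_notin: "E \<notin> Rats_adjoin \<gamma>"
    and others: "\<And>i j. i \<le> d \<Longrightarrow> (i, j) \<noteq> (k, low_degree (P k)) \<Longrightarrow>
      coeff (P i) j * F ((E - real j) / \<gamma> ^ i) = 0"
    using mahler_dominant_term[OF \<gamma> P m_notin m_least] by blast
  have "poly_hahn A E = (\<Sum>i\<le>d. pmul_hahn (P i) (subst_hahn (\<gamma> ^ i) F) E)"
    using fun_cong[OF eq, of E] by simp
  also have "\<dots> = coeff (P k) (low_degree (P k)) * F m"
    using mahler_sum_eq_single_term[OF k(1) others] \<gamma>(1) by (simp add: E)
  finally have "poly_hahn A E \<noteq> 0"
    using coeff_low_degree_neq_0[OF k(2)] Fm by simp
  moreover have "poly_hahn A E = 0"
    using E_notin Rats_adjoin_Rats[OF Rats_of_nat] unfolding poly_hahn_def by auto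
  ultimately show False
    by contradiction
qed

lemma mahler_higher_coeffs_eq_0:
  fixes P :: "nat \<Rightarrow> complex poly" and \<gamma> :: real
  assumes \<gamma>: "\<gamma> > 0" "\<not> algebraic \<gamma>" and supp: "{t. F t \<noteq> 0} \<subseteq> \<rat>"
    and s: "F s \<noteq> 0" "s \<noteq> 0" and i: "0 < i" "i \<le> d"
    and eq: "(\<lambda>e. \<Sum>i\<le>d. pmul_hahn (P i) (subst_hahn (\<gamma> ^ i) F) e) = poly_hahn A"
  shows "P i = 0"
proof (rule poly_eqI)
  fix n
  have s_rat: "s \<in> \<rat>"
    using supp s(1) by blast
  define e where "e = real n + \<gamma> ^ i * s"
  have others: "coeff (P i') j * F ((e - real j) / \<gamma> ^ i') = 0" if "(i', j) \<noteq> (i, n)" for i' j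
  proof (rule ccontr)
    define r where "r = (e - real j) / \<gamma> ^ i'"
    assume "coeff (P i') j * F ((e - real j) / \<gamma> ^ i') \<noteq> 0"
    then have r_rat: "r \<in> \<rat>"
      using supp by (auto simp: r_def)
    have "(real n - real j) + s * \<gamma> ^ i = r * \<gamma> ^ i'"
      using \<gamma>(1) by (simp add: r_def e_def)
    then have "i' = i \<and> real n - real j = 0"
      by (rule transcendental_affine_power_eq[OF \<gamma>(2)]) (simp_all add: Rats_diff s_rat r_rat i(1) s(2))
    with that show False by simp
  qed
  have "poly_hahn A e = 0"
  proof -
    have "e \<noteq> real n'" for n'
    proof
      assume "e = real n'"
      then have "(real n - real n') + s * \<gamma> ^ i = 0 * \<gamma> ^ 0"
        by (simp add: e_def algebra_simps)
      then have "0 = i \<and> real n - real n' = 0"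
        by (rule transcendental_affine_power_eq[OF \<gamma>(2)]) (simp_all add: Rats_diff s_rat i(1) s(2))
      with i(1) show False
        by simp
    qed
    then show ?thesis
      by (auto simp: poly_hahn_def)
  qed
  moreover have "poly_hahn A e = coeff (P i) n * F s"
  proof -
    have "poly_hahn A e = (\<Sum>i\<le>d. pmul_hahn (P i) (subst_hahn (\<gamma> ^ i) F) e)"
      using fun_cong[OF eq, of e] by simp
    also have "\<dots> = coeff (P i) n * F ((e - real n) / \<gamma> ^ i)"
      using i(2) others by (intro mahler_sum_eq_single_term) simp_all
    finally show ?thesis
      using \<gamma>(1) by (simp add: e_def)
  qed
  ultimately show "coeff (P i) n = coeff 0 n"
    using s(1) by simp
qed

lemma rational_hahn_if_mahler_Rats_support:
  fixes P :: "nat \<Rightarrow> complex poly" and \<gamma> :: real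
  assumes \<gamma>: "\<gamma> > 0" "\<not> algebraic \<gamma>" and supp: "{t. F t \<noteq> 0} \<subseteq> \<rat>"
    and K: "0 \<in> K" "1 \<in> K" "F 0 \<in> K"
    and PK: "\<forall>i\<le>d. P i \<in> Kpoly K" and AK: "A \<in> Kpoly K" and P: "\<exists>i\<le>d. P i \<noteq> 0"
    and eq: "(\<lambda>e. \<Sum>i\<le>d. pmul_hahn (P i) (subst_hahn (\<gamma> ^ i) F) e) = poly_hahn A"
  shows "rational_hahn K F"
proof (cases "\<exists>s. s \<noteq> 0 \<and> F s \<noteq> 0")
  case True
  then obtain s where s: "F s \<noteq> 0" "s \<noteq> 0"
    by blast
  have higher: "P i = 0" if "0 < i" "i \<le> d" for i
    using mahler_higher_coeffs_eq_0[OF \<gamma> supp s that eq] .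
  then have "P 0 \<noteq> 0"
    using P by (metis gr0I)
  moreover have "pmul_hahn (P 0) F = poly_hahn A"
  proof
    fix e
    have "(\<Sum>i\<le>d. pmul_hahn (P i) (subst_hahn (\<gamma> ^ i) F) e)
        = (\<Sum>i\<in>{0}. pmul_hahn (P i) (subst_hahn (\<gamma> ^ i) F) e)"
      using higher by (intro sum.mono_neutral_right) (auto simp: pmul_hahn_def)
    then show "pmul_hahn (P 0) F e = poly_hahn A e"
      using fun_cong[OF eq, of e] by (simp add: pmul_hahn_def subst_hahn_def)
  qed
  ultimately show ?thesis
    using PK AK unfolding rational_hahn_def by blast
next
  case False
  have "pmul_hahn 1 F = poly_hahn [:F 0:]"
  proof
    fix e
    show "pmul_hahn 1 F e = poly_hahn [:F 0:] e"
      using False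
      by (cases "e = 0") (auto simp: pmul_hahn_def poly_hahn_def coeff_pCons split: nat.split)
  qed
  moreover have "[:F 0:] \<in> Kpoly K" "1 \<in> Kpoly K"
    using K by (auto simp: Kpoly_def coeff_pCons coeff_1 split: nat.split)
  ultimately show ?thesis
    unfolding rational_hahn_def by (metis one_neq_zero)
qed

theorem mainTheorem2:
  fixes K :: "complex set" and \<alpha> \<beta> :: real and F :: "real \<Rightarrow> complex"
  assumes "number_field K"
    and "\<alpha> > 0" and "\<beta> > 0" and "alg_indep2 \<alpha> \<beta>"
    and "hahn_series K F"
    and "mahler K \<alpha> F" and "mahler K \<beta> F"
  shows "rational_hahn K F"
proof -
  have K: "0 \<in> K" "1 \<in> K" "F 0 \<in> K"
    using assms(1,5) by (simp_all add: number_field_def hahn_series_def)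
  have transc: "\<not> algebraic \<alpha>" "\<not> algebraic \<beta>"
    using assms(4) alg_indep2_commute alg_indep2_transcendental by blast+
  obtain d P A where \<alpha>: "\<forall>i\<le>d. P i \<in> Kpoly K" "A \<in> Kpoly K" "\<exists>i\<le>d. P i \<noteq> 0"
    "(\<lambda>e. \<Sum>i\<le>d. pmul_hahn (P i) (subst_hahn (\<alpha> ^ i) F) e) = poly_hahn A"
    using assms(6) unfolding mahler_def by blast
  obtain d' P' A' where \<beta>: "\<exists>i\<le>d'. P' i \<noteq> 0"
    "(\<lambda>e. \<Sum>i\<le>d'. pmul_hahn (P' i) (subst_hahn (\<beta> ^ i) F) e) = poly_hahn A'"
    using assms(7) unfolding mahler_def by blast
  have "{t. F t \<noteq> 0} \<subseteq> Rats_adjoin \<alpha> \<inter> Rats_adjoin \<beta>"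
    using mahler_support_subset_Rats_adjoin[OF assms(2) transc(1) assms(5) \<alpha>(3,4)]
      mahler_support_subset_Rats_adjoin[OF assms(3) transc(2) assms(5) \<beta>] by blast
  then have "{t. F t \<noteq> 0} \<subseteq> \<rat>"
    using alg_indep2_Rats_adjoin_Int_subset[OF assms(4)] by blast
  then show ?thesis
    using rational_hahn_if_mahler_Rats_support[OF assms(2) transc(1) _ K \<alpha>] by blast
qed

end
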